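(* In the setting described in the context, let $t_1,\dots,t_k$ be an enumeration of the distinct elements of $T\setminus D$. For $j=0,\dots,k$ let $A_j=D\cup\{t_1,\dots,t_j\}$. Set $c_0=\tfrac12|\Pi_D|$. For $j\ge1$, write $t_j=[e_1,e_2]$ and let $L_1,L_2\in\Pi_{A_{j-1}}$ be the circuits containing $e_1$ and $e_2$. Set $c_j=c_{j-1}-1$ if $L_2\neq (L_1)^*_{A_{j-1}}$ and $L_1,L_2$ are not both shorted with respect to $A_{j-1}$; otherwise set $c_j=c_{j-1}$. Then: (a) for every $j$, $c_j$ equals the number of circuit pairs of $\Pi_{A_j}$ that are not shorted; (b) $\bar x$ is an extreme point of $P^n$ if and only if $c_j=0$ for some $j\in\{0,\dots,k\}$, equivalently if and only if every circuit of $\Pi_{D\cup T}$ is shorted.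
   Context: Let $n\ge4$, $V=\{0,\dots,n-1\}$, and let $E=\{(u,v)\in V\times V:u\ne v\}$ be the set of arcs, written $uv$. Let $\chi_e\in\mathbb R^E$ be unit vectors and $\chi_F=\sum_{e\in F}\chi_e$. Let $\delta^\pm(w)$ be the arcs leaving/entering $w$, let $\delta^+(S)=\{uv:u\in S,v\notin S\}$, let $\mathcal S=\{S\subset V:2\le|S|\le n-2\}$, and let $x(F)=\sum_{e\in F}x_e$. The polytope is $P^n=\{x\in\mathbb R^E: x(\delta^+(w))=x(\delta^-(w))=1\ \forall w,\ x(\delta^+(S))\ge1\ \forall S\in\mathcal S,\ x\ge0\}$. Fix $\bar x\in P^n\cap\{0,\tfrac12\}^E$ and let $E_{\bar x}=\{e:\bar x_e=\tfrac12\}$. For $a\in\{0,1\}^E$ let $\mathrm{pr}(a)=\sum_{e\in E_{\bar x}}a_e\chi_e$. Let $\mathcal S_{\bar x}=\{S\in\mathcal S:\bar x(\delta^+(S))=1\}$. Define the sets $$D=\{\mathrm{pr}(\chi_{\delta^+(u)}),\mathrm{pr}(\chi_{\delta^-(u)}):u\in V\}, \qquad T=\{\mathrm{pr}(\chi_{\delta^+(S)}):S\in\mathcal S_{\bar x}\}.$$ Every vector of $D\cup T$ equals $\chi_{e_1}+\chi_{e_2}$ for two distinct arcs $e_1,e_2\in E_{\bar x}$; it is written $[e_1,e_2]=[e_2,e_1]$. Let $A$ be a set with $D\subseteq A\subseteq D\cup T$. On $E_{\bar x}$ define the relation $e\sim_A e'$ iff there is $\bar e\in E_{\bar x}$ with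 $[e,\bar e]\in A$ and $[\bar e,e']\in A$. Let $\equiv_A$ be its transitive closure; this is an equivalence relation. The equivalence classes are called circuits, and they form the circuit partition $\Pi_A$ of $E_{\bar x}$. For $L\in\Pi_A$, the set $\{\bar e\in E_{\bar x}:\exists e\in L,\ [e,\bar e]\in A\}$ is nonempty and contained in a unique circuit, denoted $L^*_A$ and called the dual of $L$. The pair $\{L,L^*_A\}$ is a circuit pair. $L$ is called shorted if $L^*_A=L$. For $A=D$ no circuit is shorted and circuits come in disjoint dual pairs, so $|\Pi_D|$ is even. *)

theory Defs
  imports Main "HOL-Analysis.Analysis"
begin

type_synonym arc = "nat \<times> nat"

definition verts :: "nat \<Rightarrow> nat set" where
  "verts n = {0..<n}"

definition arcs :: "nat \<Rightarrow> arc set" where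
  "arcs n = {(u,v). u \<in> verts n \<and> v \<in> verts n \<and> u \<noteq> v}"

definition out_arcs :: "nat \<Rightarrow> nat \<Rightarrow> arc set" where
  "out_arcs n w = {e \<in> arcs n. fst e = w}"

definition in_arcs :: "nat \<Rightarrow> nat \<Rightarrow> arc set" where
  "in_arcs n w = {e \<in> arcs n. snd e = w}"

definition out_cut :: "nat \<Rightarrow> nat set \<Rightarrow> arc set" where
  "out_cut n S = {e \<in> arcs n. fst e \<in> S \<and> snd e \<notin> S}"

definition subtour_sets :: "nat \<Rightarrow> nat set set" where
  "subtour_sets n = {S. S \<subseteq> verts n \<and> 2 \<le> card S \<and> card S \<le> n - 2}"

text \<open>Points of R^E are functions on arcs that vanish off E.\<close>
definition polytope :: "nat \<Rightarrow> (arc \<Rightarrow> real) set" where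
  "polytope n = {x. (\<forall>e. e \<notin> arcs n \<longrightarrow> x e = 0)
      \<and> (\<forall>w \<in> verts n. sum x (out_arcs n w) = 1 \<and> sum x (in_arcs n w) = 1)
      \<and> (\<forall>S \<in> subtour_sets n. sum x (out_cut n S) \<ge> 1)
      \<and> (\<forall>e \<in> arcs n. x e \<ge> 0)}"

definition is_extreme_point :: "(arc \<Rightarrow> real) \<Rightarrow> (arc \<Rightarrow> real) set \<Rightarrow> bool" where
  "is_extreme_point x P \<longleftrightarrow> x \<in> P \<and>
     \<not> (\<exists>y \<in> P. \<exists>z \<in> P. y \<noteq> z \<and> (\<exists>l::real. 0 < l \<and> l < 1 \<and>
            x = (\<lambda>e. l * y e + (1 - l) * z e)))"

definition half_arcs :: "nat \<Rightarrow> (arc \<Rightarrow> real) \<Rightarrow> arc set" where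
  "half_arcs n x = {e \<in> arcs n. x e = 1/2}"

text \<open>A 0/1 vector chi_F is represented by the arc set F; pr(chi_F) = chi_(F \<inter> E_x).
  So the vectors [e1,e2] are represented by the two-element sets {e1,e2}.\<close>
definition pr :: "nat \<Rightarrow> (arc \<Rightarrow> real) \<Rightarrow> arc set \<Rightarrow> arc set" where
  "pr n x F = F \<inter> half_arcs n x"

definition tight_sets :: "nat \<Rightarrow> (arc \<Rightarrow> real) \<Rightarrow> nat set set" where
  "tight_sets n x = {S \<in> subtour_sets n. sum x (out_cut n S) = 1}"

definition Dset :: "nat \<Rightarrow> (arc \<Rightarrow> real) \<Rightarrow> arc set set" where
  "Dset n x = {pr n x (out_arcs n u) | u. u \<in> verts n} \<union> {pr n x (in_arcs n u) | u. u \<in> verts n}"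

definition Tset :: "nat \<Rightarrow> (arc \<Rightarrow> real) \<Rightarrow> arc set set" where
  "Tset n x = {pr n x (out_cut n S) | S. S \<in> tight_sets n x}"

definition sim_rel :: "nat \<Rightarrow> (arc \<Rightarrow> real) \<Rightarrow> arc set set \<Rightarrow> arc rel" where
  "sim_rel n x A = {(e, e'). e \<in> half_arcs n x \<and> e' \<in> half_arcs n x \<and>
       (\<exists>eb \<in> half_arcs n x. {e, eb} \<in> A \<and> {eb, e'} \<in> A)}"

definition circ_equiv :: "nat \<Rightarrow> (arc \<Rightarrow> real) \<Rightarrow> arc set set \<Rightarrow> arc rel" where
  "circ_equiv n x A = (sim_rel n x A)\<^sup>+"

definition circuits :: "nat \<Rightarrow> (arc \<Rightarrow> real) \<Rightarrow> arc set set \<Rightarrow> arc set set" where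
  "circuits n x A = half_arcs n x // circ_equiv n x A"

definition circuit_of :: "nat \<Rightarrow> (arc \<Rightarrow> real) \<Rightarrow> arc set set \<Rightarrow> arc \<Rightarrow> arc set" where
  "circuit_of n x A e = circ_equiv n x A `` {e}"

definition dual_circuit :: "nat \<Rightarrow> (arc \<Rightarrow> real) \<Rightarrow> arc set set \<Rightarrow> arc set \<Rightarrow> arc set" where
  "dual_circuit n x A L = (THE M. M \<in> circuits n x A \<and>
      {eb \<in> half_arcs n x. \<exists>e \<in> L. {e, eb} \<in> A} \<subseteq> M)"

definition shorted :: "nat \<Rightarrow> (arc \<Rightarrow> real) \<Rightarrow> arc set set \<Rightarrow> arc set \<Rightarrow> bool" where
  "shorted n x A L \<longleftrightarrow> dual_circuit n x A L = L"

definition nonshorted_pairs :: "nat \<Rightarrow> (arc \<Rightarrow> real) \<Rightarrow> arc set set \<Rightarrow> arc set set set" where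
  "nonshorted_pairs n x A = {{L, dual_circuit n x A L} | L. L \<in> circuits n x A \<and> \<not> shorted n x A L}"

definition A_step :: "nat \<Rightarrow> (arc \<Rightarrow> real) \<Rightarrow> arc set list \<Rightarrow> nat \<Rightarrow> arc set set" where
  "A_step n x ts j = Dset n x \<union> set (take j ts)"

definition decreases :: "nat \<Rightarrow> (arc \<Rightarrow> real) \<Rightarrow> arc set set \<Rightarrow> arc set \<Rightarrow> bool" where
  "decreases n x A t \<longleftrightarrow> (\<exists>e1 e2. t = {e1, e2} \<and> e1 \<noteq> e2 \<and>
      circuit_of n x A e2 \<noteq> dual_circuit n x A (circuit_of n x A e1) \<and>
      \<not> (shorted n x A (circuit_of n x A e1) \<and> shorted n x A (circuit_of n x A e2)))"

primrec counter :: "nat \<Rightarrow> (arc \<Rightarrow> real) \<Rightarrow> arc set list \<Rightarrow> nat \<Rightarrow> int" where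
  "counter n x ts 0 = int (card (circuits n x (Dset n x))) div 2"
| "counter n x ts (Suc j) = (if decreases n x (A_step n x ts j) (ts ! j)
       then counter n x ts j - 1 else counter n x ts j)"

end

theory Submission
  imports Defs
begin

text \<open>
  The arcs of value 1/2 and the two-element sets in A form a graph. Circuits are the classes of
  arcs joined by walks of even length, the dual of a circuit consists of the neighbours of its
  arcs, and a circuit is shorted iff it contains a closed walk of odd length. So the non-shorted
  circuit pairs are the bipartite components of the graph. The new pair [e1, e2] merges the
  circuit of e1 with the dual of the circuit of e2, and the circuit of e2 with the dual of the
  circuit of e1. Comparing the four circuits involved shows that the number of non-shorted
  pairs drops by one exactly when the counter does. For A = D the graph alternates between arcs
  with a common tail and arcs with a common head. So the composition g of the two partner maps
  generates the circuits. The tail partner reverses the orbits of g. On an orbit that it mapped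
  into itself it would therefore act as a reflection, and one of the two partner maps would then
  fix an arc. Hence no D-circuit is shorted.

  Further, x is extreme iff every direction d supported on the half arcs with
  d p + d q = 0 for all pairs {p, q} of D \<union> T is zero, since such a d gives the feasible
  points x \<plusminus> d/6. Such a d is constant on circuits and changes sign between dual circuits.
  So it vanishes iff every circuit is shorted, and a non-shorted pair {L, L*} gives the
  direction 1_L - 1_L*.
\<close>

section \<open>Circuit systems\<close>

lemma finite_arcs: "finite (arcs n)"
  unfolding arcs_def verts_def by (rule finite_subset[of _ "{0..<n} \<times> {0..<n}"]) auto

lemma finite_half_arcs: "finite (half_arcs n x)"
  unfolding half_arcs_def using finite_arcs by simp

lemma circuits_iff: "L \<in> circuits n x A \<longleftrightarrow> (\<exists>a \<in> half_arcs n x. L = circ_equiv n x A `` {a})"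
  unfolding circuits_def quotient_def by simp

lemma circ_equiv_subset: "circ_equiv n x A \<subseteq> half_arcs n x \<times> half_arcs n x"
  unfolding circ_equiv_def by (rule trancl_subset_Sigma) (auto simp: sim_rel_def)

lemma circuit_subset_half_arcs: "L \<in> circuits n x A \<Longrightarrow> L \<subseteq> half_arcs n x"
  unfolding circuits_iff using circ_equiv_subset by blast

lemma circ_equiv_mono: "A \<subseteq> B \<Longrightarrow> circ_equiv n x A \<subseteq> circ_equiv n x B"
  unfolding circ_equiv_def sim_rel_def by (rule trancl_mono_subset) blast

definition nonshorted_circuits :: "nat \<Rightarrow> (arc \<Rightarrow> real) \<Rightarrow> arc set set \<Rightarrow> arc set set" where
  "nonshorted_circuits n x A = {L \<in> circuits n x A. \<not> shorted n x A L}"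

definition pair_balanced :: "arc set set \<Rightarrow> (arc \<Rightarrow> real) \<Rightarrow> bool" where
  "pair_balanced A d \<longleftrightarrow> (\<forall>p q. {p, q} \<in> A \<longrightarrow> d p + d q = 0)"

lemma pair_balancedD: "pair_balanced A d \<Longrightarrow> {p, q} \<in> A \<Longrightarrow> d p + d q = 0"
  unfolding pair_balanced_def by blast

locale circuit_system =
  fixes n :: nat and x :: "arc \<Rightarrow> real" and A :: "arc set set"
  assumes pairs: "F \<in> A \<Longrightarrow> \<exists>a b. a \<noteq> b \<and> a \<in> half_arcs n x \<and> b \<in> half_arcs n x \<and> F = {a, b}"
    and partner_exists: "a \<in> half_arcs n x \<Longrightarrow> \<exists>b. {a, b} \<in> A"
begin

abbreviation "H \<equiv> half_arcs n x"
abbreviation "E \<equiv> circ_equiv n x A"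

lemma pair_memD: "{a, b} \<in> A \<Longrightarrow> a \<in> H \<and> b \<in> H \<and> a \<noteq> b"
proof -
  assume "{a, b} \<in> A"
  then obtain a' b' where "a' \<noteq> b'" "a' \<in> H" "b' \<in> H" "{a, b} = {a', b'}" using pairs by blast
  then show ?thesis by (auto simp: doubleton_eq_iff)
qed

lemma sim_rel_iff: "(a, c) \<in> sim_rel n x A \<longleftrightarrow> (\<exists>b. {a, b} \<in> A \<and> {b, c} \<in> A)"
  unfolding sim_rel_def using pair_memD by blast

lemma two_step_in_circ_equiv: "{a, b} \<in> A \<Longrightarrow> {b, c} \<in> A \<Longrightarrow> (a, c) \<in> E"
  unfolding circ_equiv_def using sim_rel_iff by blast

lemma equiv_circ_equiv: "equiv H E"
proof (rule equivI)
  show "E \<subseteq> H \<times> H" by (rule circ_equiv_subset)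
  show "refl_on H E"
  proof (rule refl_onI)
    fix a assume "a \<in> H"
    then obtain b where "{a, b} \<in> A" using partner_exists by blast
    moreover from this have "{b, a} \<in> A" by (simp add: insert_commute)
    ultimately show "(a, a) \<in> E" by (rule two_step_in_circ_equiv)
  qed
  have "sym (sim_rel n x A)"
    by (rule symI) (auto simp: sim_rel_iff insert_commute)
  then show "sym E" unfolding circ_equiv_def by (rule sym_trancl)
  show "trans E" unfolding circ_equiv_def by (rule trans_trancl)
qed

lemma circ_equiv_refl: "a \<in> H \<Longrightarrow> (a, a) \<in> E"
  using equiv_circ_equiv by (meson equiv_def refl_onD)

lemma circ_equiv_sym: "(a, b) \<in> E \<Longrightarrow> (b, a) \<in> E"
  using equiv_circ_equiv by (meson equiv_def symD)

lemma circ_equiv_trans: "(a, b) \<in> E \<Longrightarrow> (b, c) \<in> E \<Longrightarrow> (a, c) \<in> E"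
  unfolding circ_equiv_def by (rule trancl_trans)

lemma class_eq_iff: "a \<in> H \<Longrightarrow> b \<in> H \<Longrightarrow> E``{a} = E``{b} \<longleftrightarrow> (a, b) \<in> E"
  by (rule eq_equiv_class_iff[OF equiv_circ_equiv])

lemma circ_equiv_partners:
  assumes "(a, c) \<in> E" and "{a, b} \<in> A" and "{c, d} \<in> A"
  shows "(b, d) \<in> E"
proof -
  have "(a, c) \<in> (sim_rel n x A)\<^sup>+" using assms(1) unfolding circ_equiv_def .
  then show ?thesis using assms(3)
  proof (induction arbitrary: d rule: trancl_induct)
    case (base c)
    then obtain m where "{a, m} \<in> A" "{m, c} \<in> A" using sim_rel_iff by blast
    moreover have "{b, a} \<in> A" using assms(2) by (simp add: insert_commute)
    ultimately have "(b, m) \<in> E" "(m, d) \<in> E"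
      using two_step_in_circ_equiv base.prems by blast+
    then show ?case by (rule circ_equiv_trans)
  next
    case (step c c')
    then obtain m where "{c, m} \<in> A" "{m, c'} \<in> A" using sim_rel_iff by blast
    then have "(b, m) \<in> E" "(m, d) \<in> E"
      using step.IH two_step_in_circ_equiv step.prems by blast+
    then show ?case by (rule circ_equiv_trans)
  qed
qed

lemma dual_circuit_class:
  assumes ab: "{a, b} \<in> A"
  shows "dual_circuit n x A (E``{a}) = E``{b}"
  unfolding dual_circuit_def
proof (rule the_equality)
  have a: "a \<in> H" and b: "b \<in> H" using pair_memD[OF ab] by auto
  have "E``{b} \<in> circuits n x A" unfolding circuits_iff using b by blast
  moreover have "{eb \<in> H. \<exists>e \<in> E``{a}. {e, eb} \<in> A} \<subseteq> E``{b}"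
  proof
    fix eb assume "eb \<in> {eb \<in> H. \<exists>e \<in> E``{a}. {e, eb} \<in> A}"
    then obtain e where "(a, e) \<in> E" "{e, eb} \<in> A" by blast
    then have "(b, eb) \<in> E" using circ_equiv_partners[OF _ ab] by blast
    then show "eb \<in> E``{b}" by simp
  qed
  ultimately show "E``{b} \<in> circuits n x A \<and> {eb \<in> H. \<exists>e \<in> E``{a}. {e, eb} \<in> A} \<subseteq> E``{b}" ..
  fix M assume M: "M \<in> circuits n x A \<and> {eb \<in> H. \<exists>e \<in> E``{a}. {e, eb} \<in> A} \<subseteq> M"
  then have "M \<in> circuits n x A" ..
  then obtain c where c: "M = E``{c}" unfolding circuits_iff by blast
  have "a \<in> E``{a}" using circ_equiv_refl[OF a] by blast
  then have "b \<in> M" using M ab b by blast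
  then have "(c, b) \<in> E" using c by blast
  then show "M = E``{b}" unfolding c by (rule equiv_class_eq[OF equiv_circ_equiv])
qed

lemma shorted_class_iff:
  assumes "{a, b} \<in> A"
  shows "shorted n x A (E``{a}) \<longleftrightarrow> (a, b) \<in> E"
proof -
  have "a \<in> H" "b \<in> H" using pair_memD[OF assms] by auto
  then have "E``{b} = E``{a} \<longleftrightarrow> (a, b) \<in> E" using class_eq_iff circ_equiv_sym by blast
  then show ?thesis unfolding shorted_def dual_circuit_class[OF assms] .
qed

lemma dual_circuit_circuit:
  assumes "L \<in> circuits n x A"
  shows "dual_circuit n x A L \<in> circuits n x A" and "dual_circuit n x A (dual_circuit n x A L) = L"
proof -
  obtain a where a: "a \<in> H" "L = E``{a}" using assms circuits_iff by blast
  then obtain b where ab: "{a, b} \<in> A" using partner_exists by blast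
  have ba: "{b, a} \<in> A" using ab by (simp add: insert_commute)
  have dual_L: "dual_circuit n x A L = E``{b}" using a(2) dual_circuit_class[OF ab] by simp
  show "dual_circuit n x A L \<in> circuits n x A"
    unfolding dual_L circuits_iff using pair_memD[OF ab] by blast
  have "dual_circuit n x A (E``{b}) = E``{a}" by (rule dual_circuit_class[OF ba])
  then show "dual_circuit n x A (dual_circuit n x A L) = L" using dual_L a(2) by simp
qed

lemma class_disjoint_iff: "a \<in> H \<Longrightarrow> b \<in> H \<Longrightarrow> E``{a} \<inter> E``{b} = {} \<longleftrightarrow> E``{a} \<noteq> E``{b}"
  using disjnt_equiv_class[OF equiv_circ_equiv] class_eq_iff unfolding disjnt_def by blast

lemma nonshorted_circuits_eq:
  "nonshorted_circuits n x A = {E``{a} | a. a \<in> H \<and> \<not> shorted n x A (E``{a})}"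
  unfolding nonshorted_circuits_def circuits_iff by blast

lemma finite_circuits: "finite (circuits n x A)"
  unfolding circuits_def using finite_quotient[OF finite_half_arcs circ_equiv_subset] .

lemma dual_nonshorted_circuit:
  assumes "L \<in> nonshorted_circuits n x A"
  shows "dual_circuit n x A L \<in> nonshorted_circuits n x A" and "dual_circuit n x A L \<noteq> L"
    and "dual_circuit n x A (dual_circuit n x A L) = L"
proof -
  have L: "L \<in> circuits n x A" "dual_circuit n x A L \<noteq> L"
    using assms unfolding nonshorted_circuits_def shorted_def by auto
  show dd: "dual_circuit n x A (dual_circuit n x A L) = L" by (rule dual_circuit_circuit(2)[OF L(1)])
  show "dual_circuit n x A L \<noteq> L" by (rule L(2))
  show "dual_circuit n x A L \<in> nonshorted_circuits n x A"
    unfolding nonshorted_circuits_def shorted_def using dual_circuit_circuit(1)[OF L(1)] dd L(2) by simp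
qed

lemma nonshorted_pairs_eq:
  "nonshorted_pairs n x A = (\<lambda>L. {L, dual_circuit n x A L}) ` nonshorted_circuits n x A"
  unfolding nonshorted_pairs_def nonshorted_circuits_def by blast

lemma nonshorted_pairs_disjoint:
  assumes P: "P \<in> nonshorted_pairs n x A" and Q: "Q \<in> nonshorted_pairs n x A" and "P \<noteq> Q"
  shows "P \<inter> Q = {}"
proof (rule ccontr)
  let ?d = "dual_circuit n x A"
  assume "P \<inter> Q \<noteq> {}"
  obtain L M where LM: "L \<in> nonshorted_circuits n x A" "M \<in> nonshorted_circuits n x A"
    "P = {L, ?d L}" "Q = {M, ?d M}"
    using P Q unfolding nonshorted_pairs_eq by blast
  have "?d L = M \<Longrightarrow> L = ?d M" and "?d L = ?d M \<Longrightarrow> L = M"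
    using dual_nonshorted_circuit(3)[OF LM(1)] dual_nonshorted_circuit(3)[OF LM(2)] by metis+
  with \<open>P \<inter> Q \<noteq> {}\<close> LM(3,4) have "L = M \<or> L = ?d M" by blast
  then have "P = Q" using LM(3,4) dual_nonshorted_circuit(3)[OF LM(2)] by (auto simp: insert_commute)
  with \<open>P \<noteq> Q\<close> show False by contradiction
qed

lemma card_nonshorted_pairs:
  "2 * card (nonshorted_pairs n x A) = card (nonshorted_circuits n x A)"
proof -
  have union: "\<Union>(nonshorted_pairs n x A) = nonshorted_circuits n x A"
    unfolding nonshorted_pairs_eq using dual_nonshorted_circuit(1) by blast
  have fin: "finite (nonshorted_circuits n x A)"
    unfolding nonshorted_circuits_def using finite_circuits by simp
  have "card P = 2" if P: "P \<in> nonshorted_pairs n x A" for P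
  proof -
    obtain L where "L \<in> nonshorted_circuits n x A" "P = {L, dual_circuit n x A L}"
      using P unfolding nonshorted_pairs_eq by blast
    then show ?thesis using dual_nonshorted_circuit(2)[of L] by (simp add: eq_commute)
  qed
  moreover have "finite (nonshorted_pairs n x A)" unfolding nonshorted_pairs_eq using fin by simp
  ultimately have "2 * card (nonshorted_pairs n x A) = card (\<Union>(nonshorted_pairs n x A))"
    using fin union nonshorted_pairs_disjoint by (intro card_partition) simp_all
  then show ?thesis using union by simp
qed

lemma card_nonshorted_pairs_eq_0_iff:
  "card (nonshorted_pairs n x A) = 0 \<longleftrightarrow> (\<forall>L \<in> circuits n x A. shorted n x A L)"
proof -
  have "finite (nonshorted_pairs n x A)"
    unfolding nonshorted_pairs_def using finite_circuits by simp
  then show ?thesis unfolding nonshorted_pairs_def by auto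
qed

lemma pair_balanced_iff_sum: "pair_balanced A d \<longleftrightarrow> (\<forall>F \<in> A. sum d F = 0)"
proof
  assume bal: "pair_balanced A d"
  show "\<forall>F \<in> A. sum d F = 0"
  proof
    fix F assume "F \<in> A"
    then obtain a b where "a \<noteq> b" "F = {a, b}" "{a, b} \<in> A" using pairs by blast
    then show "sum d F = 0" using pair_balancedD[OF bal] by simp
  qed
next
  assume sums: "\<forall>F \<in> A. sum d F = 0"
  show "pair_balanced A d" unfolding pair_balanced_def
  proof (intro allI impI)
    fix p q assume "{p, q} \<in> A"
    then have "p \<noteq> q" "sum d {p, q} = 0" using sums pair_memD[of p q] by blast+
    then show "d p + d q = 0" by simp
  qed
qed

lemma pair_balanced_class_constant:
  assumes "pair_balanced A d" and "(p, q) \<in> E"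
  shows "d p = d q"
proof -
  have sim: "d p = d q" if pq: "(p, q) \<in> sim_rel n x A" for p q
  proof -
    obtain b where "{p, b} \<in> A" "{b, q} \<in> A" using pq sim_rel_iff by blast
    then have "d p + d b = 0" "d b + d q = 0" using pair_balancedD[OF assms(1)] by blast+
    then show ?thesis by linarith
  qed
  have "(p, q) \<in> (sim_rel n x A)\<^sup>+" using assms(2) unfolding circ_equiv_def .
  then show ?thesis
  proof (induction rule: trancl_induct)
    case (step q r)
    then show ?case using sim[OF step(2)] by simp
  qed (rule sim)
qed

lemma pair_balanced_vanishes:
  assumes "\<forall>L \<in> circuits n x A. shorted n x A L" and "pair_balanced A d" and "a \<in> H"
  shows "d a = 0"
proof -
  obtain b where ab: "{a, b} \<in> A" using partner_exists[OF assms(3)] by blast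
  have "E``{a} \<in> circuits n x A" unfolding circuits_iff using assms(3) by blast
  then have "(a, b) \<in> E" using assms(1) shorted_class_iff[OF ab] by blast
  then have "d a = d b" by (rule pair_balanced_class_constant[OF assms(2)])
  moreover have "d a + d b = 0" using pair_balancedD[OF assms(2) ab] .
  ultimately show ?thesis by simp
qed

lemma partner_in_dual_iff:
  assumes L: "L \<in> circuits n x A" and pq: "{p, q} \<in> A"
  shows "p \<in> L \<longleftrightarrow> q \<in> dual_circuit n x A L"
proof -
  obtain a where a: "a \<in> H" "L = E``{a}" using L unfolding circuits_iff by blast
  then obtain b where ab: "{a, b} \<in> A" using partner_exists by blast
  have "{b, a} \<in> A" "{q, p} \<in> A" using ab pq by (simp_all add: insert_commute)
  then have "(a, p) \<in> E \<longleftrightarrow> (b, q) \<in> E"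
    using circ_equiv_partners[OF _ ab pq] circ_equiv_partners[of b q a p] by blast
  then show ?thesis unfolding a(2) dual_circuit_class[OF ab] by simp
qed

lemma circuit_difference_balanced:
  assumes "L \<in> circuits n x A"
  shows "pair_balanced A (\<lambda>e. indicator L e - indicator (dual_circuit n x A L) e)"
  unfolding pair_balanced_def
proof (intro allI impI)
  fix p q assume pq: "{p, q} \<in> A"
  then have "{q, p} \<in> A" by (simp add: insert_commute)
  then have "p \<in> L \<longleftrightarrow> q \<in> dual_circuit n x A L" "q \<in> L \<longleftrightarrow> p \<in> dual_circuit n x A L"
    using partner_in_dual_iff[OF assms] pq by blast+
  then show "indicator L p - indicator (dual_circuit n x A L) p
      + (indicator L q - indicator (dual_circuit n x A L) q) = (0::real)"
    by (simp add: indicator_def)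
qed

lemma nonshorted_disjoint_dual:
  assumes "L \<in> circuits n x A" and "\<not> shorted n x A L"
  shows "L \<inter> dual_circuit n x A L = {}"
proof -
  obtain a where a: "a \<in> H" "L = E``{a}" using assms(1) unfolding circuits_iff by blast
  then obtain b where ab: "{a, b} \<in> A" using partner_exists by blast
  have "E``{a} \<noteq> E``{b}" using assms(2) unfolding shorted_def a(2) dual_circuit_class[OF ab] by simp
  moreover have "a \<in> H" "b \<in> H" using pair_memD[OF ab] by auto
  ultimately show ?thesis unfolding a(2) dual_circuit_class[OF ab] using class_disjoint_iff by blast
qed

end

section \<open>Adding a pair to a circuit system\<close>

lemma setcompr_split:
  "U \<subseteq> V \<Longrightarrow> {f a | a. a \<in> V \<and> P a} = {f a | a. a \<in> V - U \<and> P a} \<union> {f a | a. a \<in> U \<and> P a}"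
  by blast

lemma ex_doubleton_iff: "a \<noteq> b \<Longrightarrow> (\<exists>c d. {a, b} = {c, d} \<and> c \<noteq> d \<and> P c d) \<longleftrightarrow> P a b \<or> P b a"
  by (auto simp: doubleton_eq_iff)

text \<open>Read l1, m1, l2, m2 as the circuits of e1, e2 and their duals: the left-hand side is the
  number of new non-shorted circuits plus twice the decrease of the counter, the right-hand side
  the number of non-shorted circuits among the four.\<close>
lemma card_two_dual_pairs:
  assumes "l1 = l2 \<longleftrightarrow> m1 = m2" and "l2 = m1 \<longleftrightarrow> l1 = m2"
  shows "(if l1 \<noteq> m1 \<and> m1 \<noteq> m2 \<and> l2 \<noteq> l1 \<and> l2 \<noteq> m2 then 2 else 0)
      + (if l2 \<noteq> m1 \<and> \<not> (l1 = m1 \<and> l2 = m2) then 2 else 0)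
    = card ((if l1 = m1 then {} else {l1, m1}) \<union> (if l2 = m2 then {} else {l2, m2}))"
  using assms by (auto simp: card_insert_if)

locale circuit_insertion = circuit_system +
  fixes e1 e2 m1 m2 :: arc
  assumes new_pair_distinct: "e1 \<noteq> e2"
    and partner1: "{e1, m1} \<in> A" and partner2: "{e2, m2} \<in> A"
begin

lemma in_half: "e1 \<in> H" "e2 \<in> H" "m1 \<in> H" "m2 \<in> H"
  using pair_memD[OF partner1] pair_memD[OF partner2] by blast+

sublocale new: circuit_system n x "insert {e1, e2} A"
proof
  fix F assume "F \<in> insert {e1, e2} A"
  then show "\<exists>a b. a \<noteq> b \<and> a \<in> H \<and> b \<in> H \<and> F = {a, b}"
    using pairs new_pair_distinct in_half by blast
next
  fix a assume "a \<in> H"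
  then show "\<exists>b. {a, b} \<in> insert {e1, e2} A" using partner_exists by blast
qed

abbreviation "E' \<equiv> circ_equiv n x (insert {e1, e2} A)"

text \<open>The new pair joins the dual of the circuit of e1 to the circuit of e2, and the circuit
  of e1 to the dual of the circuit of e2.\<close>
definition "U1 = E``{m1} \<union> E``{e2}"
definition "U2 = E``{e1} \<union> E``{m2}"

lemma U_closed: "(p, q) \<in> E \<Longrightarrow> (p \<in> U1 \<longleftrightarrow> q \<in> U1) \<and> (p \<in> U2 \<longleftrightarrow> q \<in> U2)"
  unfolding U1_def U2_def using circ_equiv_trans circ_equiv_sym by blast

lemma U_half: "U1 \<subseteq> H" "U2 \<subseteq> H" "U1 \<union> U2 \<subseteq> H"
  unfolding U1_def U2_def using circ_equiv_subset by blast+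

lemma mem_U: "e2 \<in> U1" "m1 \<in> U1" "e1 \<in> U2" "m2 \<in> U2"
  unfolding U1_def U2_def using circ_equiv_refl in_half by blast+

lemma new_partner_e1: "{e1, p} \<in> insert {e1, e2} A \<Longrightarrow> p \<in> U1"
proof -
  assume "{e1, p} \<in> insert {e1, e2} A"
  then have "p = e2 \<or> {e1, p} \<in> A" using new_pair_distinct by (auto simp: doubleton_eq_iff)
  moreover have "{e1, p} \<in> A \<Longrightarrow> (m1, p) \<in> E"
    using circ_equiv_partners[OF circ_equiv_refl[OF in_half(1)] partner1] by blast
  ultimately show "p \<in> U1" unfolding U1_def using mem_U(1) U1_def by blast
qed

lemma new_partner_e2: "{e2, p} \<in> insert {e1, e2} A \<Longrightarrow> p \<in> U2"
proof -
  assume "{e2, p} \<in> insert {e1, e2} A"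
  then have "p = e1 \<or> {e2, p} \<in> A" using new_pair_distinct by (auto simp: doubleton_eq_iff)
  moreover have "{e2, p} \<in> A \<Longrightarrow> (m2, p) \<in> E"
    using circ_equiv_partners[OF circ_equiv_refl[OF in_half(2)] partner2] by blast
  ultimately show "p \<in> U2" unfolding U2_def using mem_U(3) U2_def by blast
qed

lemma new_circ_equiv_to_e1_e2: "p \<in> U1 \<Longrightarrow> (p, e2) \<in> E'" "p \<in> U2 \<Longrightarrow> (p, e1) \<in> E'"
proof -
  have E_sub: "E \<subseteq> E'" by (rule circ_equiv_mono) blast
  have "{m1, e1} \<in> insert {e1, e2} A" "{e1, e2} \<in> insert {e1, e2} A"
    using partner1 by (auto simp: insert_commute)
  then have "(m1, e2) \<in> E'" by (rule new.two_step_in_circ_equiv)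
  then show "p \<in> U1 \<Longrightarrow> (p, e2) \<in> E'"
    unfolding U1_def using E_sub new.circ_equiv_sym new.circ_equiv_trans by blast
  have "{m2, e2} \<in> insert {e1, e2} A" "{e2, e1} \<in> insert {e1, e2} A"
    using partner2 by (auto simp: insert_commute)
  then have "(m2, e1) \<in> E'" by (rule new.two_step_in_circ_equiv)
  then show "p \<in> U2 \<Longrightarrow> (p, e1) \<in> E'"
    unfolding U2_def using E_sub new.circ_equiv_sym new.circ_equiv_trans by blast
qed

definition "merged = E \<union> U1 \<times> U1 \<union> U2 \<times> U2 \<union> (if U1 \<inter> U2 = {} then {} else (U1 \<union> U2) \<times> (U1 \<union> U2))"

lemma merged_iff:
  "(p, q) \<in> merged \<longleftrightarrow> (p, q) \<in> E \<or> (p \<in> U1 \<and> q \<in> U1) \<or> (p \<in> U2 \<and> q \<in> U2)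
     \<or> (U1 \<inter> U2 \<noteq> {} \<and> p \<in> U1 \<union> U2 \<and> q \<in> U1 \<union> U2)"
  unfolding merged_def by simp

lemma trans_merged: "trans merged"
proof (rule transI)
  fix p q r assume "(p, q) \<in> merged" "(q, r) \<in> merged"
  then show "(p, r) \<in> merged"
    unfolding merged_iff using U_closed[of p q] U_closed[of q r] circ_equiv_trans[of p q r] by blast
qed

lemma sim_rel_insert_subset_merged: "sim_rel n x (insert {e1, e2} A) \<subseteq> merged"
proof (rule subrelI)
  fix p q assume "(p, q) \<in> sim_rel n x (insert {e1, e2} A)"
  then obtain b where pb: "{p, b} \<in> insert {e1, e2} A" and bq: "{b, q} \<in> insert {e1, e2} A"
    using new.sim_rel_iff by blast
  consider "b = e1" | "b = e2" | "b \<noteq> e1" "b \<noteq> e2" by blast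
  then show "(p, q) \<in> merged"
  proof cases
    case 1
    then have "{e1, p} \<in> insert {e1, e2} A" "{e1, q} \<in> insert {e1, e2} A"
      using pb bq by (simp_all add: insert_commute)
    then have "p \<in> U1" "q \<in> U1" using new_partner_e1 by blast+
    then show ?thesis unfolding merged_iff by blast
  next
    case 2
    then have "{e2, p} \<in> insert {e1, e2} A" "{e2, q} \<in> insert {e1, e2} A"
      using pb bq by (simp_all add: insert_commute)
    then have "p \<in> U2" "q \<in> U2" using new_partner_e2 by blast+
    then show ?thesis unfolding merged_iff by blast
  next
    case 3
    then have "{p, b} \<in> A" "{b, q} \<in> A" using pb bq by auto
    then have "(p, q) \<in> E" by (rule two_step_in_circ_equiv)
    then show ?thesis unfolding merged_iff by blast
  qed
qed

lemma merged_subset_new_circ_equiv: "merged \<subseteq> E'"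
proof (rule subrelI)
  fix p q assume pq: "(p, q) \<in> merged"
  have "E \<subseteq> E'" by (rule circ_equiv_mono) blast
  moreover have "(p, q) \<in> E'" if "p \<in> U1" "q \<in> U1"
    using new_circ_equiv_to_e1_e2(1)[OF that(1)] new_circ_equiv_to_e1_e2(1)[OF that(2)]
      new.circ_equiv_sym new.circ_equiv_trans by blast
  moreover have "(p, q) \<in> E'" if "p \<in> U2" "q \<in> U2"
    using new_circ_equiv_to_e1_e2(2)[OF that(1)] new_circ_equiv_to_e1_e2(2)[OF that(2)]
      new.circ_equiv_sym new.circ_equiv_trans by blast
  moreover have "(p, q) \<in> E'" if "U1 \<inter> U2 \<noteq> {}" "p \<in> U1 \<union> U2" "q \<in> U1 \<union> U2"
  proof -
    from that(1) obtain z where "z \<in> U1" "z \<in> U2" by blast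
    then have "(z, e2) \<in> E'" "(e1, z) \<in> E'"
      using new_circ_equiv_to_e1_e2 new.circ_equiv_sym by blast+
    then have e21: "(e2, e1) \<in> E'" using new.circ_equiv_sym new.circ_equiv_trans by blast
    have to_e1: "(r, e1) \<in> E'" if "r \<in> U1 \<union> U2" for r
      using that new_circ_equiv_to_e1_e2 new.circ_equiv_trans[OF _ e21] by blast
    show ?thesis using to_e1[OF that(2)] to_e1[OF that(3)] new.circ_equiv_sym new.circ_equiv_trans by blast
  qed
  ultimately show "(p, q) \<in> E'" using pq unfolding merged_iff by blast
qed

lemma circ_equiv_insert: "E' = merged"
proof
  have "E' \<subseteq> merged\<^sup>+"
    unfolding circ_equiv_def by (rule trancl_mono_subset[OF sim_rel_insert_subset_merged])
  then show "E' \<subseteq> merged" using trans_merged by simp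
qed (rule merged_subset_new_circ_equiv)

lemma new_circ_equiv_iff:
  "(p, q) \<in> E' \<longleftrightarrow> (p, q) \<in> E \<or> (p \<in> U1 \<and> q \<in> U1) \<or> (p \<in> U2 \<and> q \<in> U2)
     \<or> (U1 \<inter> U2 \<noteq> {} \<and> p \<in> U1 \<union> U2 \<and> q \<in> U1 \<union> U2)"
  unfolding circ_equiv_insert by (rule merged_iff)

lemma new_class_outside: "a \<notin> U1 \<union> U2 \<Longrightarrow> E'``{a} = E``{a}"
  using new_circ_equiv_iff by blast

lemma new_class_U1: "U1 \<inter> U2 = {} \<Longrightarrow> a \<in> U1 \<Longrightarrow> E'``{a} = U1"
proof (rule set_eqI)
  fix q assume "U1 \<inter> U2 = {}" "a \<in> U1"
  then show "q \<in> E'``{a} \<longleftrightarrow> q \<in> U1" using new_circ_equiv_iff[of a q] U_closed[of a q] by blast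
qed

lemma new_class_U2: "U1 \<inter> U2 = {} \<Longrightarrow> a \<in> U2 \<Longrightarrow> E'``{a} = U2"
proof (rule set_eqI)
  fix q assume "U1 \<inter> U2 = {}" "a \<in> U2"
  then show "q \<in> E'``{a} \<longleftrightarrow> q \<in> U2" using new_circ_equiv_iff[of a q] U_closed[of a q] by blast
qed

lemma new_class_joined: "U1 \<inter> U2 \<noteq> {} \<Longrightarrow> a \<in> U1 \<union> U2 \<Longrightarrow> E'``{a} = U1 \<union> U2"
proof (rule set_eqI)
  fix q assume "U1 \<inter> U2 \<noteq> {}" "a \<in> U1 \<union> U2"
  then show "q \<in> E'``{a} \<longleftrightarrow> q \<in> U1 \<union> U2" using new_circ_equiv_iff[of a q] U_closed[of a q] by blast
qed

lemma new_shorted_outside: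
  assumes "a \<in> H" and "a \<notin> U1 \<union> U2"
  shows "shorted n x (insert {e1, e2} A) (E'``{a}) \<longleftrightarrow> shorted n x A (E``{a})"
proof -
  obtain b where ab: "{a, b} \<in> A" using partner_exists[OF assms(1)] by blast
  then have "{a, b} \<in> insert {e1, e2} A" by blast
  then show ?thesis
    using shorted_class_iff[OF ab] new.shorted_class_iff new_circ_equiv_iff[of a b] assms(2) by blast
qed

lemma new_shorted_e1_e2:
  "shorted n x (insert {e1, e2} A) (E'``{e1}) \<longleftrightarrow> U1 \<inter> U2 \<noteq> {}"
  "shorted n x (insert {e1, e2} A) (E'``{e2}) \<longleftrightarrow> U1 \<inter> U2 \<noteq> {}"
proof -
  have "(e1, e2) \<in> E' \<longleftrightarrow> U1 \<inter> U2 \<noteq> {}"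
    using new_circ_equiv_iff[of e1 e2] mem_U U_closed[of e1 e2] by blast
  moreover have "{e1, e2} \<in> insert {e1, e2} A" "{e2, e1} \<in> insert {e1, e2} A"
    by (simp_all add: insert_commute)
  ultimately show "shorted n x (insert {e1, e2} A) (E'``{e1}) \<longleftrightarrow> U1 \<inter> U2 \<noteq> {}"
    and "shorted n x (insert {e1, e2} A) (E'``{e2}) \<longleftrightarrow> U1 \<inter> U2 \<noteq> {}"
    using new.shorted_class_iff new.circ_equiv_sym by blast+
qed

abbreviation "outside_nonshorted \<equiv> {E``{a} | a. a \<in> H - (U1 \<union> U2) \<and> \<not> shorted n x A (E``{a})}"

abbreviation "inside_nonshorted \<equiv>
  (if E``{e1} = E``{m1} then {} else {E``{e1}, E``{m1}}) \<union> (if E``{e2} = E``{m2} then {} else {E``{e2}, E``{m2}})"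

abbreviation "new_inside_nonshorted \<equiv> if U1 \<inter> U2 = {} then {U1, U2} else {}"

lemma new_nonshorted_outside:
  "{E'``{a} | a. a \<in> H - (U1 \<union> U2) \<and> \<not> shorted n x (insert {e1, e2} A) (E'``{a})} = outside_nonshorted"
  unfolding setcompr_eq_image
proof (rule image_cong)
  show "{a. a \<in> H - (U1 \<union> U2) \<and> \<not> shorted n x (insert {e1, e2} A) (E'``{a})}
      = {a. a \<in> H - (U1 \<union> U2) \<and> \<not> shorted n x A (E``{a})}"
    by (rule Collect_cong) (use new_shorted_outside in auto)
qed (simp add: new_class_outside)

lemma new_nonshorted_inside:
  "{E'``{a} | a. a \<in> U1 \<union> U2 \<and> \<not> shorted n x (insert {e1, e2} A) (E'``{a})} = new_inside_nonshorted"
proof (cases "U1 \<inter> U2 = {}")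
  case True
  let ?sh = "shorted n x (insert {e1, e2} A)"
  have U1: "E'``{e2} = U1" and U2: "E'``{e1} = U2"
    using new_class_U1[OF True mem_U(1)] new_class_U2[OF True mem_U(3)] .
  have "\<not> ?sh U1" "\<not> ?sh U2" using new_shorted_e1_e2 True unfolding U1 U2 by simp_all
  have classes: "E'``{a} \<in> {U1, U2}" if "a \<in> U1 \<union> U2" for a
    using that new_class_U1[OF True, of a] new_class_U2[OF True, of a] by blast
  have "{E'``{a} | a. a \<in> U1 \<union> U2 \<and> \<not> ?sh (E'``{a})} = {U1, U2}"
  proof (intro equalityI subsetI)
    fix C assume "C \<in> {E'``{a} | a. a \<in> U1 \<union> U2 \<and> \<not> ?sh (E'``{a})}"
    then obtain a where "a \<in> U1 \<union> U2" "C = E'``{a}" by blast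
    then show "C \<in> {U1, U2}" using classes by simp
  next
    have "U1 = E'``{e2} \<and> e2 \<in> U1 \<union> U2 \<and> \<not> ?sh (E'``{e2})"
      "U2 = E'``{e1} \<and> e1 \<in> U1 \<union> U2 \<and> \<not> ?sh (E'``{e1})"
      using U1 U2 mem_U \<open>\<not> ?sh U1\<close> \<open>\<not> ?sh U2\<close> by simp_all
    then show "C \<in> {E'``{a} | a. a \<in> U1 \<union> U2 \<and> \<not> ?sh (E'``{a})}" if "C \<in> {U1, U2}" for C
      using that by blast
  qed
  then show ?thesis using True by simp
next
  case False
  have "shorted n x (insert {e1, e2} A) (E'``{a})" if "a \<in> U1 \<union> U2" for a
  proof -
    have "E'``{a} = E'``{e1}"
      using new_class_joined[OF False that] new_class_joined[OF False UnI2[OF mem_U(3)]] by simp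
    then show ?thesis using new_shorted_e1_e2(1) False by simp
  qed
  then have "{E'``{a} | a. a \<in> U1 \<union> U2 \<and> \<not> shorted n x (insert {e1, e2} A) (E'``{a})} = {}"
    by blast
  then show ?thesis using False by simp
qed

lemma new_nonshorted_circuits:
  "nonshorted_circuits n x (insert {e1, e2} A) = outside_nonshorted \<union> new_inside_nonshorted"
  unfolding new.nonshorted_circuits_eq setcompr_split[OF U_half(3)] new_nonshorted_outside
    new_nonshorted_inside ..

lemma shorted_partner_classes:
  "shorted n x A (E``{e1}) \<longleftrightarrow> E``{e1} = E``{m1}" "shorted n x A (E``{m1}) \<longleftrightarrow> E``{e1} = E``{m1}"
  "shorted n x A (E``{e2}) \<longleftrightarrow> E``{e2} = E``{m2}" "shorted n x A (E``{m2}) \<longleftrightarrow> E``{e2} = E``{m2}"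
proof -
  have "{m1, e1} \<in> A" "{m2, e2} \<in> A" using partner1 partner2 by (simp_all add: insert_commute)
  then show "shorted n x A (E``{e1}) \<longleftrightarrow> E``{e1} = E``{m1}" "shorted n x A (E``{m1}) \<longleftrightarrow> E``{e1} = E``{m1}"
    "shorted n x A (E``{e2}) \<longleftrightarrow> E``{e2} = E``{m2}" "shorted n x A (E``{m2}) \<longleftrightarrow> E``{e2} = E``{m2}"
    using shorted_class_iff[OF partner1] shorted_class_iff[OF partner2]
      shorted_class_iff[of m1 e1] shorted_class_iff[of m2 e2]
      class_eq_iff[OF in_half(1,3)] class_eq_iff[OF in_half(3,1)]
      class_eq_iff[OF in_half(2,4)] class_eq_iff[OF in_half(4,2)]
    by (simp_all add: eq_commute[of "E``{m1}"] eq_commute[of "E``{m2}"])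
qed

lemma class_of_U: "a \<in> U1 \<union> U2 \<Longrightarrow> E``{a} \<in> {E``{e1}, E``{m1}, E``{e2}, E``{m2}}"
  unfolding U1_def U2_def using equiv_class_eq[OF equiv_circ_equiv] by blast

lemma nonshorted_inside:
  "{E``{a} | a. a \<in> U1 \<union> U2 \<and> \<not> shorted n x A (E``{a})} = inside_nonshorted"
proof (intro equalityI subsetI)
  let ?sh = "shorted n x A"
  fix C assume "C \<in> {E``{a} | a. a \<in> U1 \<union> U2 \<and> \<not> ?sh (E``{a})}"
  then obtain a where "a \<in> U1 \<union> U2" "C = E``{a}" "\<not> ?sh C" by blast
  then have "C \<in> {E``{e1}, E``{m1}, E``{e2}, E``{m2}}" "\<not> ?sh C" using class_of_U by simp_all
  then show "C \<in> inside_nonshorted" by (elim insertE emptyE) (simp_all add: shorted_partner_classes)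
next
  let ?sh = "shorted n x A"
  fix C assume "C \<in> inside_nonshorted"
  then consider "C = E``{e1} \<or> C = E``{m1}" "E``{e1} \<noteq> E``{m1}"
    | "C = E``{e2} \<or> C = E``{m2}" "E``{e2} \<noteq> E``{m2}"
    by (auto split: if_splits)
  then have "\<exists>a \<in> {e1, m1, e2, m2}. C = E``{a} \<and> \<not> ?sh C"
  proof cases
    case 1
    then have "\<not> ?sh C" using shorted_partner_classes(1,2) by metis
    with 1(1) show ?thesis by blast
  next
    case 2
    then have "\<not> ?sh C" using shorted_partner_classes(3,4) by metis
    with 2(1) show ?thesis by blast
  qed
  then show "C \<in> {E``{a} | a. a \<in> U1 \<union> U2 \<and> \<not> ?sh (E``{a})}" using mem_U by blast
qed

lemma nonshorted_circuits_split: "nonshorted_circuits n x A = outside_nonshorted \<union> inside_nonshorted"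
  unfolding nonshorted_circuits_eq setcompr_split[OF U_half(3)] nonshorted_inside ..

lemma partner_class_eqs:
  "E``{e1} = E``{e2} \<longleftrightarrow> E``{m1} = E``{m2}" "E``{e2} = E``{m1} \<longleftrightarrow> E``{e1} = E``{m2}"
proof -
  have m1e1: "{m1, e1} \<in> A" and m2e2: "{m2, e2} \<in> A"
    using partner1 partner2 by (simp_all add: insert_commute)
  have "(e1, e2) \<in> E \<longleftrightarrow> (m1, m2) \<in> E"
    using circ_equiv_partners[OF _ partner1 partner2] circ_equiv_partners[OF _ m1e1 m2e2] by blast
  moreover have "(e2, m1) \<in> E \<longleftrightarrow> (e1, m2) \<in> E"
    using circ_equiv_partners[OF _ partner2 m1e1] circ_equiv_partners[OF _ partner1 m2e2]
      circ_equiv_sym by blast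
  ultimately show "E``{e1} = E``{e2} \<longleftrightarrow> E``{m1} = E``{m2}" "E``{e2} = E``{m1} \<longleftrightarrow> E``{e1} = E``{m2}"
    using class_eq_iff in_half by simp_all
qed

lemma U_disjoint_iff:
  "U1 \<inter> U2 = {} \<longleftrightarrow>
     E``{e1} \<noteq> E``{m1} \<and> E``{m1} \<noteq> E``{m2} \<and> E``{e2} \<noteq> E``{e1} \<and> E``{e2} \<noteq> E``{m2}"
proof -
  have "U1 \<inter> U2 = {} \<longleftrightarrow> E``{m1} \<inter> E``{e1} = {} \<and> E``{m1} \<inter> E``{m2} = {} \<and>
      E``{e2} \<inter> E``{e1} = {} \<and> E``{e2} \<inter> E``{m2} = {}"
    unfolding U1_def U2_def by blast
  then show ?thesis using class_disjoint_iff in_half by (simp add: eq_commute[of "E``{m1}" "E``{e1}"])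
qed

lemma decreases_iff:
  "decreases n x A {e1, e2} \<longleftrightarrow> E``{e2} \<noteq> E``{m1} \<and> \<not> (E``{e1} = E``{m1} \<and> E``{e2} = E``{m2})"
proof -
  have dual: "dual_circuit n x A (E``{e1}) = E``{m1}" "dual_circuit n x A (E``{e2}) = E``{m2}"
    using dual_circuit_class partner1 partner2 by blast+
  have "decreases n x A {e1, e2} \<longleftrightarrow>
      (E``{e2} \<noteq> E``{m1} \<and> \<not> (shorted n x A (E``{e1}) \<and> shorted n x A (E``{e2}))) \<or>
      (E``{e1} \<noteq> E``{m2} \<and> \<not> (shorted n x A (E``{e2}) \<and> shorted n x A (E``{e1})))"
    unfolding decreases_def ex_doubleton_iff[OF new_pair_distinct] circuit_of_def dual ..
  then show ?thesis using partner_class_eqs(2) shorted_partner_classes(1,3) by blast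
qed

lemma card_nonshorted_circuits_insert:
  "card (nonshorted_circuits n x (insert {e1, e2} A)) + (if decreases n x A {e1, e2} then 2 else 0)
     = card (nonshorted_circuits n x A)"
proof -
  have "outside_nonshorted \<subseteq> circuits n x A"
  proof
    fix C assume "C \<in> outside_nonshorted"
    then obtain a where "a \<in> H" "C = E``{a}" by blast
    then show "C \<in> circuits n x A" unfolding circuits_iff by blast
  qed
  then have fin: "finite outside_nonshorted" using finite_circuits finite_subset by blast
  have outside: "\<not> C \<subseteq> U1 \<union> U2" if "C \<in> outside_nonshorted" for C
    using that circ_equiv_refl by blast
  have "E``{e1} \<subseteq> U1 \<union> U2" "E``{m1} \<subseteq> U1 \<union> U2" "E``{e2} \<subseteq> U1 \<union> U2" "E``{m2} \<subseteq> U1 \<union> U2"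
    unfolding U1_def U2_def by blast+
  then have "C \<subseteq> U1 \<union> U2" if "C \<in> inside_nonshorted \<union> new_inside_nonshorted" for C
    using that by (auto split: if_splits)
  then have "outside_nonshorted \<inter> inside_nonshorted = {}"
    "outside_nonshorted \<inter> new_inside_nonshorted = {}"
    using outside by blast+
  then have "card (nonshorted_circuits n x A) = card outside_nonshorted + card inside_nonshorted"
    and "card (nonshorted_circuits n x (insert {e1, e2} A))
      = card outside_nonshorted + card new_inside_nonshorted"
    unfolding nonshorted_circuits_split new_nonshorted_circuits using fin by (simp_all add: card_Un_disjoint)
  moreover have "U1 \<noteq> U2" if "U1 \<inter> U2 = {}" using that mem_U(1) by blast
  then have "card new_inside_nonshorted = (if U1 \<inter> U2 = {} then 2 else 0)" by simp
  ultimately show ?thesis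
    using card_two_dual_pairs[OF partner_class_eqs] unfolding U_disjoint_iff decreases_iff by simp
qed

end

section \<open>Two involutions\<close>

lemma funpow_meet_trans:
  fixes f :: "'a \<Rightarrow> 'a"
  assumes "(f ^^ i) a = (f ^^ j) b" and "(f ^^ k) b = (f ^^ l) c"
  shows "(f ^^ (k + i)) a = (f ^^ (j + l)) c"
proof -
  have "(f ^^ (k + i)) a = (f ^^ (k + j)) b" using assms(1) by (simp add: funpow_add)
  also have "\<dots> = (f ^^ (j + k)) b" by (simp add: add.commute)
  also have "\<dots> = (f ^^ (j + l)) c" using assms(2) by (simp add: funpow_add)
  finally show ?thesis .
qed

definition partner_in :: "('a \<Rightarrow> 'a set) \<Rightarrow> 'a \<Rightarrow> 'a" where
  "partner_in B a = the_elem (B a - {a})"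

lemma partner_in:
  assumes "a \<in> B a" and "card (B a) = 2" and "\<And>b. b \<in> B a \<Longrightarrow> B b = B a"
  shows "B a = {a, partner_in B a}" and "partner_in B a \<noteq> a" and "partner_in B (partner_in B a) = a"
proof -
  obtain b where b: "B a = {a, b}" "b \<noteq> a"
    using assms(1,2) unfolding card_2_iff by (auto simp: doubleton_eq_iff)
  then have "B a - {a} = {b}" "B b - {b} = {a}" using assms(3)[of b] by auto
  then show "B a = {a, partner_in B a}" "partner_in B a \<noteq> a" "partner_in B (partner_in B a) = a"
    unfolding partner_in_def using b by simp_all
qed

locale involution_pair =
  fixes V :: "'a set" and \<sigma> \<tau> :: "'a \<Rightarrow> 'a"
  assumes \<sigma>: "a \<in> V \<Longrightarrow> \<sigma> a \<in> V \<and> \<sigma> (\<sigma> a) = a \<and> \<sigma> a \<noteq> a"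
    and \<tau>: "a \<in> V \<Longrightarrow> \<tau> a \<in> V \<and> \<tau> (\<tau> a) = a \<and> \<tau> a \<noteq> a"
begin

abbreviation "g \<equiv> \<tau> \<circ> \<sigma>"

lemma funpow_g_in: "a \<in> V \<Longrightarrow> (g ^^ k) a \<in> V"
  by (induction k) (simp_all add: \<sigma> \<tau>)

lemma inj_on_funpow_g: "inj_on (g ^^ k) V"
proof (induction k)
  case (Suc k)
  have "inj_on g V" by (rule inj_onI) (metis \<sigma> \<tau> comp_apply)
  moreover have "g ` V \<subseteq> V" using \<sigma> \<tau> by auto
  ultimately show ?case
    unfolding funpow_Suc_right using Suc.IH by (blast intro: comp_inj_on inj_on_subset)
qed simp

lemma \<sigma>_reverses_g: "a \<in> V \<Longrightarrow> (g ^^ k) (\<sigma> ((g ^^ k) a)) = \<sigma> a"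
proof (induction k arbitrary: a)
  case (Suc k)
  have "(g ^^ Suc k) (\<sigma> ((g ^^ Suc k) a)) = (g ^^ k) (g (\<sigma> (g ((g ^^ k) a))))"
    by (simp only: funpow_Suc_right funpow_swap1 comp_apply)
  also have "g (\<sigma> (g ((g ^^ k) a))) = \<sigma> ((g ^^ k) a)"
    using \<sigma> \<tau> funpow_g_in[OF Suc.prems] by simp
  also have "(g ^^ k) (\<sigma> ((g ^^ k) a)) = \<sigma> a" by (rule Suc.IH[OF Suc.prems])
  finally show ?case .
qed simp

lemma \<sigma>_not_in_orbit:
  assumes b: "b \<in> V"
  shows "\<sigma> b \<noteq> (g ^^ m) b"
proof
  assume orbit: "\<sigma> b = (g ^^ m) b"
  have "\<exists>r. m = r + r \<or> m = Suc (r + r)" by presburger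
  then obtain r where m: "m = r + r \<or> m = Suc (r + r)" by blast
  define c where "c = (g ^^ r) b"
  have c: "c \<in> V" "\<sigma> c \<in> V" unfolding c_def using funpow_g_in[OF b] \<sigma> by auto
  have "(g ^^ r) (\<sigma> c) = \<sigma> b" unfolding c_def by (rule \<sigma>_reverses_g[OF b])
  moreover have "\<sigma> b = (g ^^ r) c \<or> \<sigma> b = (g ^^ r) (g c)"
    using orbit m unfolding c_def by (auto simp: funpow_add funpow_swap1)
  ultimately have "\<sigma> c = c \<or> \<sigma> c = g c"
    using inj_onD[OF inj_on_funpow_g] c funpow_g_in[OF c(1), of 1] by auto
  then show False
  proof
    assume "\<sigma> c = g c"
    then have "\<tau> (\<sigma> c) = \<sigma> c" by simp
    then show False using \<tau>[OF c(2)] by simp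
  qed (use \<sigma>[OF c(1)] in simp)
qed

lemma orbits_separate_\<sigma>:
  assumes a: "a \<in> V"
  shows "(g ^^ i) a \<noteq> (g ^^ j) (\<sigma> a)"
proof
  assume eq: "(g ^^ i) a = (g ^^ j) (\<sigma> a)"
  have \<sigma>a: "\<sigma> a \<in> V" "\<sigma> (\<sigma> a) = a" using a \<sigma> by auto
  show False
  proof (cases "j \<le> i")
    case True
    then have "(g ^^ i) a = (g ^^ j) ((g ^^ (i - j)) a)"
      by (metis funpow_add le_add_diff_inverse comp_apply)
    then have "(g ^^ j) ((g ^^ (i - j)) a) = (g ^^ j) (\<sigma> a)" using eq by simp
    then have "(g ^^ (i - j)) a = \<sigma> a"
      using inj_onD[OF inj_on_funpow_g] funpow_g_in[OF a] \<sigma>a by blast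
    then show False using \<sigma>_not_in_orbit[OF a, of "i - j"] by simp
  next
    case False
    then have "(g ^^ j) (\<sigma> a) = (g ^^ i) ((g ^^ (j - i)) (\<sigma> a))"
      by (metis funpow_add le_add_diff_inverse nat_le_linear comp_apply)
    then have "(g ^^ i) a = (g ^^ i) ((g ^^ (j - i)) (\<sigma> a))" using eq by simp
    then have "a = (g ^^ (j - i)) (\<sigma> a)"
      using inj_onD[OF inj_on_funpow_g] funpow_g_in[OF \<sigma>a(1)] a by blast
    then show False using \<sigma>_not_in_orbit[OF \<sigma>a(1), of "j - i"] \<sigma>a(2) by simp
  qed
qed

end

section \<open>Half-integral points\<close>

locale half_integral_point =
  fixes n :: nat and x :: "arc \<Rightarrow> real"
  assumes in_polytope: "x \<in> polytope n"
    and half_integral: "\<forall>e \<in> arcs n. x e = 0 \<or> x e = 1/2"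
begin

abbreviation "H \<equiv> half_arcs n x"

lemma x_eq: "x e = (if e \<in> H then 1/2 else 0)"
proof (cases "e \<in> arcs n")
  case True
  then show ?thesis using half_integral unfolding half_arcs_def by auto
next
  case False
  moreover have "e \<notin> arcs n \<Longrightarrow> x e = 0" using in_polytope unfolding polytope_def by blast
  ultimately show ?thesis unfolding half_arcs_def by simp
qed

lemma sum_x_eq: "finite F \<Longrightarrow> sum x F = card (pr n x F) / 2"
proof -
  assume "finite F"
  have "sum x F = sum (\<lambda>e. if e \<in> H then 1/2 else 0) F" by (intro sum.cong refl) (rule x_eq)
  also have "\<dots> = sum (\<lambda>e. 1/2) (F \<inter> H)" by (rule sum.inter_restrict[OF \<open>finite F\<close>, symmetric])
  finally show ?thesis unfolding pr_def by simp
qed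

lemma pr_doubleton:
  assumes "F \<subseteq> arcs n" and "sum x F = 1"
  shows "\<exists>a b. a \<noteq> b \<and> a \<in> H \<and> b \<in> H \<and> pr n x F = {a, b}"
proof -
  have "card (pr n x F) = 2"
    using assms sum_x_eq[OF finite_subset[OF assms(1) finite_arcs]] by simp
  then obtain a b where "a \<noteq> b" "pr n x F = {a, b}" unfolding card_2_iff by blast
  moreover have "pr n x F \<subseteq> H" unfolding pr_def by blast
  ultimately show ?thesis by blast
qed

lemma degree_sums: "u \<in> verts n \<Longrightarrow> sum x (out_arcs n u) = 1 \<and> sum x (in_arcs n u) = 1"
  using in_polytope unfolding polytope_def by blast

lemma Dset_pair:
  assumes "F \<in> Dset n x"
  shows "\<exists>a b. a \<noteq> b \<and> a \<in> H \<and> b \<in> H \<and> F = {a, b}"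
proof -
  obtain u where u: "u \<in> verts n" and F: "F = pr n x (out_arcs n u) \<or> F = pr n x (in_arcs n u)"
    using assms unfolding Dset_def by blast
  have "out_arcs n u \<subseteq> arcs n" "in_arcs n u \<subseteq> arcs n"
    unfolding out_arcs_def in_arcs_def by blast+
  from pr_doubleton[OF this(1)] pr_doubleton[OF this(2)] show ?thesis
    using F degree_sums[OF u] by (elim disjE) simp_all
qed

lemma Tset_pair:
  assumes "F \<in> Tset n x"
  shows "\<exists>a b. a \<noteq> b \<and> a \<in> H \<and> b \<in> H \<and> F = {a, b}"
proof -
  obtain S where S: "sum x (out_cut n S) = 1" and F: "F = pr n x (out_cut n S)"
    using assms unfolding Tset_def tight_sets_def by blast
  have "out_cut n S \<subseteq> arcs n" unfolding out_cut_def by blast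
  from pr_doubleton[OF this S] show ?thesis unfolding F .
qed

definition "tail_block a = pr n x (out_arcs n (fst a))"
definition "head_block a = pr n x (in_arcs n (snd a))"

lemma tail_block:
  assumes "a \<in> H"
  shows "a \<in> tail_block a" "card (tail_block a) = 2" "b \<in> tail_block a \<Longrightarrow> tail_block b = tail_block a"
    "tail_block a \<in> Dset n x"
proof -
  have a: "a \<in> arcs n" using assms unfolding half_arcs_def by blast
  then have u: "fst a \<in> verts n" unfolding arcs_def by auto
  show "a \<in> tail_block a" using assms a unfolding tail_block_def pr_def out_arcs_def by simp
  have fin: "finite (out_arcs n (fst a))" using finite_arcs unfolding out_arcs_def by simp
  show "card (tail_block a) = 2"
    using sum_x_eq[OF fin] degree_sums[OF u] unfolding tail_block_def by simp
  show "b \<in> tail_block a \<Longrightarrow> tail_block b = tail_block a"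
    unfolding tail_block_def pr_def out_arcs_def by simp
  show "tail_block a \<in> Dset n x" unfolding tail_block_def Dset_def using u by blast
qed

lemma head_block:
  assumes "a \<in> H"
  shows "a \<in> head_block a" "card (head_block a) = 2" "b \<in> head_block a \<Longrightarrow> head_block b = head_block a"
    "head_block a \<in> Dset n x"
proof -
  have a: "a \<in> arcs n" using assms unfolding half_arcs_def by blast
  then have u: "snd a \<in> verts n" unfolding arcs_def by auto
  show "a \<in> head_block a" using assms a unfolding head_block_def pr_def in_arcs_def by simp
  have fin: "finite (in_arcs n (snd a))" using finite_arcs unfolding in_arcs_def by simp
  show "card (head_block a) = 2"
    using sum_x_eq[OF fin] degree_sums[OF u] unfolding head_block_def by simp
  show "b \<in> head_block a \<Longrightarrow> head_block b = head_block a"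
    unfolding head_block_def pr_def in_arcs_def by simp
  show "head_block a \<in> Dset n x" unfolding head_block_def Dset_def using u by blast
qed

definition "tail_partner = partner_in tail_block"
definition "head_partner = partner_in head_block"

lemma tail_partner:
  assumes "a \<in> H"
  shows "tail_block a = {a, tail_partner a}" "tail_partner a \<noteq> a" "tail_partner (tail_partner a) = a"
  unfolding tail_partner_def
  using partner_in[of a tail_block, OF tail_block(1,2)[OF assms] tail_block(3)[OF assms]] by blast+

lemma head_partner:
  assumes "a \<in> H"
  shows "head_block a = {a, head_partner a}" "head_partner a \<noteq> a" "head_partner (head_partner a) = a"
  unfolding head_partner_def
  using partner_in[of a head_block, OF head_block(1,2)[OF assms] head_block(3)[OF assms]] by blast+

lemma partners_in_Dset: "a \<in> H \<Longrightarrow> {a, tail_partner a} \<in> Dset n x" "a \<in> H \<Longrightarrow> {a, head_partner a} \<in> Dset n x"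
  using tail_block(4) head_block(4) tail_partner(1) head_partner(1) by metis+

lemma circuit_system_between:
  assumes "Dset n x \<subseteq> A" and "A \<subseteq> Dset n x \<union> Tset n x"
  shows "circuit_system n x A"
proof
  fix F assume "F \<in> A"
  then show "\<exists>a b. a \<noteq> b \<and> a \<in> H \<and> b \<in> H \<and> F = {a, b}" using assms(2) Dset_pair Tset_pair by blast
next
  fix a assume "a \<in> H"
  then show "\<exists>b. {a, b} \<in> A" using partners_in_Dset assms(1) by blast
qed

sublocale D: circuit_system n x "Dset n x"
  by (rule circuit_system_between) simp_all

lemma partners_half: "a \<in> H \<Longrightarrow> tail_partner a \<in> H \<and> head_partner a \<in> H"
  using partners_in_Dset D.pair_memD by blast

sublocale arc_partners: involution_pair H tail_partner head_partner
  by unfold_locales (simp_all add: partners_half tail_partner head_partner)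

lemma Dset_partner:
  assumes ab: "{a, b} \<in> Dset n x"
  shows "b = tail_partner a \<or> b = head_partner a"
proof -
  have a: "a \<in> H" and ne: "a \<noteq> b" using D.pair_memD[OF ab] by auto
  obtain u where "{a, b} = pr n x (out_arcs n u) \<or> {a, b} = pr n x (in_arcs n u)"
    using ab unfolding Dset_def by blast
  then have "{a, b} = tail_block a \<or> {a, b} = head_block a"
  proof
    assume ab_out: "{a, b} = pr n x (out_arcs n u)"
    then have "fst a = u" unfolding pr_def out_arcs_def by blast
    then show ?thesis using ab_out unfolding tail_block_def by simp
  next
    assume ab_in: "{a, b} = pr n x (in_arcs n u)"
    then have "snd a = u" unfolding pr_def in_arcs_def by blast
    then show ?thesis using ab_in unfolding head_block_def by simp
  qed
  then show ?thesis using tail_partner(1)[OF a] head_partner(1)[OF a] ne by (auto simp: doubleton_eq_iff)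
qed

abbreviation "g \<equiv> head_partner \<circ> tail_partner"

lemma Dset_sim_rel: "(a, c) \<in> sim_rel n x (Dset n x) \<Longrightarrow> c = a \<or> c = g a \<or> a = g c"
proof -
  assume "(a, c) \<in> sim_rel n x (Dset n x)"
  then obtain b where ab: "{a, b} \<in> Dset n x" and bc: "{b, c} \<in> Dset n x" using D.sim_rel_iff by blast
  have a: "a \<in> H" and b: "b \<in> H" using D.pair_memD[OF ab] by auto
  consider "b = tail_partner a" "c = tail_partner b" | "b = tail_partner a" "c = head_partner b"
    | "b = head_partner a" "c = tail_partner b" | "b = head_partner a" "c = head_partner b"
    using Dset_partner[OF ab] Dset_partner[OF bc] by blast
  then show ?thesis
  proof cases
    case 1
    then show ?thesis using tail_partner(3)[OF a] by simp
  next
    case 2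
    then show ?thesis by simp
  next
    case 3
    then show ?thesis using tail_partner(3)[OF b] head_partner(3)[OF a] by simp
  next
    case 4
    then show ?thesis using head_partner(3)[OF a] by simp
  qed
qed

lemma Dset_circ_equiv_orbit:
  assumes "(a, c) \<in> circ_equiv n x (Dset n x)"
  shows "\<exists>i j. (g ^^ i) a = (g ^^ j) c"
proof -
  have sim_step: "\<exists>k l. (g ^^ k) b = (g ^^ l) c" if "(b, c) \<in> sim_rel n x (Dset n x)" for b c
  proof -
    have "(g ^^ 0) b = (g ^^ 0) c \<or> (g ^^ 1) b = (g ^^ 0) c \<or> (g ^^ 0) b = (g ^^ 1) c"
      using Dset_sim_rel[OF that] by auto
    then show ?thesis by blast
  qed
  have "(a, c) \<in> (sim_rel n x (Dset n x))\<^sup>+" using assms unfolding circ_equiv_def .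
  then show ?thesis
  proof (induction rule: trancl_induct)
    case (step b c)
    obtain i j where "(g ^^ i) a = (g ^^ j) b" using step.IH by blast
    moreover obtain k l where "(g ^^ k) b = (g ^^ l) c" using sim_step[OF step.hyps(2)] by blast
    ultimately have "(g ^^ (k + i)) a = (g ^^ (j + l)) c" by (rule funpow_meet_trans)
    then show ?case by blast
  qed (rule sim_step)
qed

lemma Dset_no_shorted:
  assumes "L \<in> circuits n x (Dset n x)"
  shows "\<not> shorted n x (Dset n x) L"
proof
  obtain a where a: "a \<in> H" and L: "L = D.E``{a}" using assms unfolding circuits_iff by blast
  assume "shorted n x (Dset n x) L"
  then have "(a, tail_partner a) \<in> D.E" unfolding L using D.shorted_class_iff partners_in_Dset(1)[OF a] by blast
  then obtain i j where "(g ^^ i) a = (g ^^ j) (tail_partner a)" using Dset_circ_equiv_orbit by blast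
  then show False using arc_partners.orbits_separate_\<sigma>[OF a] by blast
qed

lemma sum_restrict_half: "finite F \<Longrightarrow> (\<And>e. e \<notin> H \<Longrightarrow> d e = 0) \<Longrightarrow> sum d F = sum d (pr n x F)"
  unfolding pr_def by (intro sum.mono_neutral_right) blast+

lemma finite_constraint_sets: "finite (out_arcs n u)" "finite (in_arcs n u)" "finite (out_cut n S)"
  using finite_arcs unfolding out_arcs_def in_arcs_def out_cut_def by simp_all

lemma constraint_pairs:
  "u \<in> verts n \<Longrightarrow> pr n x (out_arcs n u) \<in> Dset n x"
  "u \<in> verts n \<Longrightarrow> pr n x (in_arcs n u) \<in> Dset n x"
  "S \<in> tight_sets n x \<Longrightarrow> pr n x (out_cut n S) \<in> Tset n x"
  unfolding Dset_def Tset_def by blast+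

sublocale DT: circuit_system n x "Dset n x \<union> Tset n x"
  by (rule circuit_system_between) simp_all

lemma balanced_constraint_sums:
  assumes bal: "pair_balanced (Dset n x \<union> Tset n x) d" and d0: "\<And>e. e \<notin> H \<Longrightarrow> d e = 0"
  shows "u \<in> verts n \<Longrightarrow> sum d (out_arcs n u) = 0" "u \<in> verts n \<Longrightarrow> sum d (in_arcs n u) = 0"
    "S \<in> tight_sets n x \<Longrightarrow> sum d (out_cut n S) = 0"
  using bal constraint_pairs sum_restrict_half[of _ d, OF finite_constraint_sets(1) d0]
    sum_restrict_half[of _ d, OF finite_constraint_sets(2) d0] sum_restrict_half[of _ d, OF finite_constraint_sets(3) d0]
  unfolding DT.pair_balanced_iff_sum by simp_all

lemma perturbation_values:
  assumes d0: "\<And>e. e \<notin> H \<Longrightarrow> d e = 0" and d1: "\<And>e. \<bar>d e\<bar> \<le> 1" and c: "\<bar>c\<bar> \<le> 1/6"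
  shows "e \<in> H \<Longrightarrow> x e + c * d e \<ge> 1/3" and "e \<notin> H \<Longrightarrow> x e + c * d e = 0"
proof -
  have "\<bar>c * d e\<bar> \<le> 1/6" using mult_mono[OF c d1[of e]] by (simp add: abs_mult)
  then have "- (c * d e) \<le> 1/6" by (rule abs_le_D2)
  then show "e \<in> H \<Longrightarrow> x e + c * d e \<ge> 1/3" using x_eq[of e] by simp
  show "e \<notin> H \<Longrightarrow> x e + c * d e = 0" using x_eq[of e] d0 by simp
qed

text \<open>On a non-tight cut, x already has at least three arcs of value 1/2, and the perturbed
  point keeps at least 1/3 on each of them.\<close>
lemma perturbation_cut_bound:
  assumes d0: "\<And>e. e \<notin> H \<Longrightarrow> d e = 0" and d1: "\<And>e. \<bar>d e\<bar> \<le> 1"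
    and bal: "pair_balanced (Dset n x \<union> Tset n x) d" and c: "\<bar>c\<bar> \<le> 1/6"
    and S: "S \<in> subtour_sets n"
  shows "(\<Sum>e \<in> out_cut n S. x e + c * d e) \<ge> 1"
proof -
  let ?y = "\<lambda>e. x e + c * d e"
  have sum_y: "sum ?y F = sum x F + c * sum d F" for F by (simp add: sum.distrib sum_distrib_left)
  show ?thesis
  proof (cases "S \<in> tight_sets n x")
    case True
    then show ?thesis using sum_y balanced_constraint_sums(3)[OF bal d0] unfolding tight_sets_def by simp
  next
    case False
    moreover have "1 \<le> sum x (out_cut n S)" using S in_polytope unfolding polytope_def by blast
    ultimately have "sum x (out_cut n S) > 1" using S unfolding tight_sets_def by auto
    then have "card (pr n x (out_cut n S)) \<ge> 3"
      using sum_x_eq[OF finite_constraint_sets(3)] by simp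
    moreover have "sum ?y (out_cut n S) = sum ?y (pr n x (out_cut n S))"
      using sum_restrict_half[of _ ?y, OF finite_constraint_sets(3)] perturbation_values(2)[of d c, OF d0 d1 c]
      by blast
    moreover have "sum ?y (pr n x (out_cut n S)) \<ge> card (pr n x (out_cut n S)) * (1/3)"
      using sum_bounded_below[of "pr n x (out_cut n S)" "1/3" ?y] perturbation_values(1)[of d c, OF d0 d1 c]
      unfolding pr_def by auto
    ultimately show ?thesis by linarith
  qed
qed

lemma perturbation_in_polytope:
  assumes d0: "\<And>e. e \<notin> H \<Longrightarrow> d e = 0" and d1: "\<And>e. \<bar>d e\<bar> \<le> 1"
    and bal: "pair_balanced (Dset n x \<union> Tset n x) d" and c: "\<bar>c\<bar> \<le> 1/6"
  shows "(\<lambda>e. x e + c * d e) \<in> polytope n"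
  unfolding polytope_def mem_Collect_eq
proof (intro conjI allI impI ballI)
  let ?y = "\<lambda>e. x e + c * d e"
  note y_half = perturbation_values(1)[of d c, OF d0 d1 c]
    and y_off = perturbation_values(2)[of d c, OF d0 d1 c]
  fix e assume "e \<notin> arcs n"
  then show "?y e = 0" using y_off unfolding half_arcs_def by blast
next
  fix w assume w: "w \<in> verts n"
  have "sum (\<lambda>e. x e + c * d e) F = sum x F + c * sum d F" for F
    by (simp add: sum.distrib sum_distrib_left)
  then show "(\<Sum>e \<in> out_arcs n w. x e + c * d e) = 1" "(\<Sum>e \<in> in_arcs n w. x e + c * d e) = 1"
    using degree_sums[OF w] balanced_constraint_sums(1,2)[OF bal d0 w] by simp_all
next
  fix S assume "S \<in> subtour_sets n"
  then show "(\<Sum>e \<in> out_cut n S. x e + c * d e) \<ge> 1"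
    using perturbation_cut_bound[of d c S, OF d0 d1 bal c] by simp
next
  fix e
  show "x e + c * d e \<ge> 0"
    using perturbation_values[of d c, OF d0 d1 c, of e] by (cases "e \<in> H") simp_all
qed

lemma convex_combination_at_lower_bound:
  fixes l Y Z :: real
  assumes "1 \<le> Y" "1 \<le> Z" "0 < l" "l < 1" "l * Y + (1 - l) * Z = 1"
  shows "Y = 1 \<and> Z = 1"
proof -
  have "l * (Y - 1) \<ge> 0" "(1 - l) * (Z - 1) \<ge> 0" using assms by simp_all
  moreover have "l * (Y - 1) + (1 - l) * (Z - 1) = 0" using assms(5) by (simp add: algebra_simps)
  ultimately have "l * (Y - 1) = 0" "(1 - l) * (Z - 1) = 0" by linarith+
  then show ?thesis using assms(3,4) by simp
qed

lemma segment_agrees_off_half_arcs: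
  assumes y: "y \<in> polytope n" and z: "z \<in> polytope n" and l: "0 < l" "l < 1"
    and x_split: "x = (\<lambda>e. l * y e + (1 - l) * z e)" and e: "e \<notin> H"
  shows "y e - z e = 0"
proof (cases "e \<in> arcs n")
  case True
  have "x e = 0" using x_eq[of e] e by simp
  then have "l * y e + (1 - l) * z e = 0" using fun_cong[OF x_split, of e] by simp
  moreover have "y e \<ge> 0" "z e \<ge> 0" using y z True unfolding polytope_def by blast+
  ultimately show ?thesis using l by (smt (verit) mult_pos_pos mult_nonneg_nonneg)
next
  case False
  then have "y e = 0" "z e = 0" using y z unfolding polytope_def by blast+
  then show ?thesis by simp
qed

lemma segment_constraint_sums:
  assumes y: "y \<in> polytope n" and z: "z \<in> polytope n" and l: "0 < l" "l < 1"
    and x_split: "x = (\<lambda>e. l * y e + (1 - l) * z e)"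
  shows "u \<in> verts n \<Longrightarrow> sum y (out_arcs n u) = sum z (out_arcs n u)"
    and "u \<in> verts n \<Longrightarrow> sum y (in_arcs n u) = sum z (in_arcs n u)"
    and "S \<in> tight_sets n x \<Longrightarrow> sum y (out_cut n S) = sum z (out_cut n S)"
proof -
  show "u \<in> verts n \<Longrightarrow> sum y (out_arcs n u) = sum z (out_arcs n u)"
    and "u \<in> verts n \<Longrightarrow> sum y (in_arcs n u) = sum z (in_arcs n u)"
    using y z unfolding polytope_def by (simp_all add: Ball_def)
  assume S: "S \<in> tight_sets n x"
  have "sum x (out_cut n S) = l * sum y (out_cut n S) + (1 - l) * sum z (out_cut n S)"
    unfolding x_split by (simp add: sum.distrib sum_distrib_left)
  moreover have "1 \<le> sum y (out_cut n S)" "1 \<le> sum z (out_cut n S)" "sum x (out_cut n S) = 1"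
    using y z S unfolding polytope_def tight_sets_def by auto
  ultimately show "sum y (out_cut n S) = sum z (out_cut n S)"
    using convex_combination_at_lower_bound l by metis
qed

lemma segment_difference_balanced:
  assumes y: "y \<in> polytope n" and z: "z \<in> polytope n" and l: "0 < l" "l < 1"
    and x_split: "x = (\<lambda>e. l * y e + (1 - l) * z e)"
  shows "pair_balanced (Dset n x \<union> Tset n x) (\<lambda>e. y e - z e)"
  unfolding DT.pair_balanced_iff_sum
proof
  define d where "d e = y e - z e" for e
  have d0: "d e = 0" if "e \<notin> H" for e
    unfolding d_def by (rule segment_agrees_off_half_arcs[OF y z l x_split that])
  have sum_pr: "sum d (pr n x G) = sum y G - sum z G" if "finite G" for G
    using sum_restrict_half[of _ d, OF that d0] unfolding d_def by (simp add: sum_subtractf)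
  fix F assume "F \<in> Dset n x \<union> Tset n x"
  then consider u where "u \<in> verts n" "F = pr n x (out_arcs n u) \<or> F = pr n x (in_arcs n u)"
    | S where "S \<in> tight_sets n x" "F = pr n x (out_cut n S)"
    unfolding Dset_def Tset_def by blast
  then obtain G where "finite G" "F = pr n x G" "sum y G = sum z G"
  proof cases
    case (1 u)
    then show thesis
      using that segment_constraint_sums(1,2)[OF y z l x_split] finite_constraint_sets(1,2) by metis
  next
    case (2 S)
    then show thesis
      using that segment_constraint_sums(3)[OF y z l x_split] finite_constraint_sets(3) by metis
  qed
  then have "sum d F = 0" using sum_pr by simp
  then show "(\<Sum>e \<in> F. y e - z e) = 0" unfolding d_def .
qed

lemma not_extreme_if_nonshorted:
  assumes L: "L \<in> circuits n x (Dset n x \<union> Tset n x)"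
    and not_shorted: "\<not> shorted n x (Dset n x \<union> Tset n x) L"
  shows "\<not> is_extreme_point x (polytope n)"
proof
  assume extreme: "is_extreme_point x (polytope n)"
  define M where "M = dual_circuit n x (Dset n x \<union> Tset n x) L"
  define d :: "arc \<Rightarrow> real" where "d e = indicator L e - indicator M e" for e
  have bal: "pair_balanced (Dset n x \<union> Tset n x) d"
    unfolding d_def M_def by (rule DT.circuit_difference_balanced[OF L])
  have "L \<subseteq> H" "M \<subseteq> H"
    using circuit_subset_half_arcs L DT.dual_circuit_circuit(1)[OF L] unfolding M_def by blast+
  then have d0: "d e = 0" if "e \<notin> H" for e using that unfolding d_def indicator_def by auto
  have d1: "\<bar>d e\<bar> \<le> 1" for e unfolding d_def by (simp add: indicator_def)
  obtain a where "a \<in> L" using L DT.circ_equiv_refl unfolding circuits_iff by blast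
  moreover have "L \<inter> M = {}" unfolding M_def by (rule DT.nonshorted_disjoint_dual[OF L not_shorted])
  ultimately have "d a = 1" unfolding d_def indicator_def by auto
  let ?y = "\<lambda>e. x e + (1/6) * d e" and ?z = "\<lambda>e. x e + (- 1/6) * d e"
  have c: "\<bar>1/6 :: real\<bar> \<le> 1/6" "\<bar>- 1/6 :: real\<bar> \<le> 1/6" by simp_all
  have "?y \<in> polytope n" "?z \<in> polytope n"
    using perturbation_in_polytope[OF d0 d1 bal c(1)] perturbation_in_polytope[OF d0 d1 bal c(2)]
    by simp_all
  moreover have "?y \<noteq> ?z"
  proof
    assume "?y = ?z"
    from fun_cong[OF this, of a] \<open>d a = 1\<close> show False by simp
  qed
  moreover have "x = (\<lambda>e. (1/2) * ?y e + (1 - 1/2) * ?z e)" by (rule ext) (simp add: algebra_simps)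
  then have "\<exists>l::real. 0 < l \<and> l < 1 \<and> x = (\<lambda>e. l * ?y e + (1 - l) * ?z e)"
    by (intro exI[of _ "1/2"]) simp
  ultimately show False using extreme unfolding is_extreme_point_def by blast
qed

lemma extreme_if_all_shorted:
  assumes all_shorted: "\<forall>L \<in> circuits n x (Dset n x \<union> Tset n x). shorted n x (Dset n x \<union> Tset n x) L"
  shows "is_extreme_point x (polytope n)"
  unfolding is_extreme_point_def
proof (intro conjI notI)
  show "x \<in> polytope n" by (rule in_polytope)
  assume "\<exists>y \<in> polytope n. \<exists>z \<in> polytope n. y \<noteq> z \<and>
    (\<exists>l. 0 < l \<and> l < 1 \<and> x = (\<lambda>e. l * y e + (1 - l) * z e))"
  then obtain y z l where yz: "y \<in> polytope n" "z \<in> polytope n" "y \<noteq> z"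
    and l: "0 < l" "l < 1" and x_split: "x = (\<lambda>e. l * y e + (1 - l) * z e)" by blast
  have "y e - z e = 0" for e
  proof (cases "e \<in> H")
    case True
    then show ?thesis using DT.pair_balanced_vanishes[OF all_shorted _ True]
      segment_difference_balanced[OF yz(1,2) l x_split] by blast
  qed (rule segment_agrees_off_half_arcs[OF yz(1,2) l x_split])
  then have "y = z" by auto
  with \<open>y \<noteq> z\<close> show False by contradiction
qed

theorem extreme_point_iff_all_shorted:
  "is_extreme_point x (polytope n) \<longleftrightarrow>
     (\<forall>L \<in> circuits n x (Dset n x \<union> Tset n x). shorted n x (Dset n x \<union> Tset n x) L)"
  using not_extreme_if_nonshorted extreme_if_all_shorted by blast

section \<open>The counter\<close>

lemma card_nonshorted_pairs_Dset:
  "card (nonshorted_pairs n x (Dset n x)) = card (circuits n x (Dset n x)) div 2"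
proof -
  have "nonshorted_circuits n x (Dset n x) = circuits n x (Dset n x)"
    unfolding nonshorted_circuits_def using Dset_no_shorted by blast
  then show ?thesis using D.card_nonshorted_pairs by simp
qed

lemma card_nonshorted_pairs_insert:
  assumes "Dset n x \<subseteq> A" and "A \<subseteq> Dset n x \<union> Tset n x" and "t \<in> Tset n x"
  shows "card (nonshorted_pairs n x (insert t A)) + (if decreases n x A t then 1 else 0)
    = card (nonshorted_pairs n x A)"
proof -
  have A: "circuit_system n x A" using assms(1,2) by (rule circuit_system_between)
  obtain e1 e2 where e: "e1 \<noteq> e2" "e1 \<in> H" "e2 \<in> H" and t: "t = {e1, e2}"
    using Tset_pair[OF assms(3)] by blast
  obtain m1 m2 where "{e1, m1} \<in> A" "{e2, m2} \<in> A"
    using circuit_system.partner_exists[OF A] e(2,3) by metis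
  then interpret I: circuit_insertion n x A e1 e2 m1 m2
    using A e(1) by (simp add: circuit_insertion_def circuit_insertion_axioms_def)
  have "2 * card (nonshorted_pairs n x (insert t A)) + (if decreases n x A t then 2 else 0)
      = 2 * card (nonshorted_pairs n x A)"
    using I.card_nonshorted_circuits_insert I.card_nonshorted_pairs I.new.card_nonshorted_pairs
    unfolding t by simp
  then show ?thesis by (simp split: if_splits)
qed

lemma A_step_between:
  assumes "set ts \<subseteq> Tset n x"
  shows "Dset n x \<subseteq> A_step n x ts j" and "A_step n x ts j \<subseteq> Dset n x \<union> Tset n x"
  using assms set_take_subset[of j ts] unfolding A_step_def by blast+

lemma counter_eq_card_nonshorted_pairs:
  assumes "set ts \<subseteq> Tset n x"
  shows "j \<le> length ts \<Longrightarrow> counter n x ts j = int (card (nonshorted_pairs n x (A_step n x ts j)))"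
proof (induction j)
  case 0
  have "A_step n x ts 0 = Dset n x" unfolding A_step_def by simp
  then show ?case using card_nonshorted_pairs_Dset by (simp add: zdiv_int)
next
  case (Suc j)
  then have j: "j < length ts" by simp
  then have "A_step n x ts (Suc j) = insert (ts ! j) (A_step n x ts j)"
    unfolding A_step_def by (simp add: take_Suc_conv_app_nth)
  moreover have "ts ! j \<in> Tset n x" using assms nth_mem[OF j] by blast
  ultimately have "card (nonshorted_pairs n x (A_step n x ts (Suc j)))
      + (if decreases n x (A_step n x ts j) (ts ! j) then 1 else 0)
      = card (nonshorted_pairs n x (A_step n x ts j))"
    using card_nonshorted_pairs_insert A_step_between[OF assms] by simp
  then show ?case using Suc by auto
qed

end

lemma counter_antimono: "j \<le> k \<Longrightarrow> counter n x ts k \<le> counter n x ts j"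
  by (rule lift_Suc_antimono_le) simp_all

theorem mainTheorem9:
  fixes n :: nat and x :: "arc \<Rightarrow> real" and ts :: "arc set list"
  assumes "n \<ge> 4"
    and "x \<in> polytope n"
    and "\<forall>e \<in> arcs n. x e = 0 \<or> x e = 1/2"
    and "distinct ts"
    and "set ts = Tset n x - Dset n x"
  shows "(\<forall>j \<le> length ts. counter n x ts j = int (card (nonshorted_pairs n x (A_step n x ts j))))
    \<and> (is_extreme_point x (polytope n) \<longleftrightarrow> (\<exists>j \<le> length ts. counter n x ts j = 0))
    \<and> (is_extreme_point x (polytope n) \<longleftrightarrow>
         (\<forall>L \<in> circuits n x (Dset n x \<union> Tset n x). shorted n x (Dset n x \<union> Tset n x) L))"
proof -
  interpret half_integral_point n x using assms(2,3) by unfold_locales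
  have ts: "set ts \<subseteq> Tset n x" using assms(5) by blast
  have counts: "\<forall>j \<le> length ts. counter n x ts j = int (card (nonshorted_pairs n x (A_step n x ts j)))"
    using counter_eq_card_nonshorted_pairs[OF ts] by blast
  have "A_step n x ts (length ts) = Dset n x \<union> Tset n x"
    using assms(5) unfolding A_step_def by auto
  then have "counter n x ts (length ts) = 0 \<longleftrightarrow>
      (\<forall>L \<in> circuits n x (Dset n x \<union> Tset n x). shorted n x (Dset n x \<union> Tset n x) L)"
    using counts DT.card_nonshorted_pairs_eq_0_iff by simp
  moreover have "(\<exists>j \<le> length ts. counter n x ts j = 0) \<longleftrightarrow> counter n x ts (length ts) = 0"
    using counter_antimono[of _ "length ts" n x ts] counts by force
  ultimately show ?thesis using counts extreme_point_iff_all_shorted by blast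
qed

end
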